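(* Let $m\ge1$, $q=2^m$, let $n$ be even, let $L$ be a $2$-linear polynomial over $\mathbb F_{q^n}$ such that $\mathrm{Tr}(x^{q+1})+L(x)$ is a permutation polynomial of $\mathbb F_{q^n}$, and let $\lambda$ be a $2$-linear polynomial over $\mathbb F_{q^n}$ that permutes $\mathbb F_{q^n}$. If $\lambda(\mathbb F_{q^2})=\mathbb F_{q^2}$, then both $\mathrm{Tr}(x^{q+1})+\lambda(x)$ and $\mathrm{Tr}(x^{q+1})+L(\lambda(x))$ are permutation polynomials of $\mathbb F_{q^n}$. If $\lambda(\mathbb F_q)=\mathbb F_q$, then $\mathrm{Tr}(x^{q+1})+\lambda(L(x))$ is a permutation polynomial of $\mathbb F_{q^n}$.
   Context: $\mathrm{Tr}$ denotes the trace map of $\mathbb F_{q^n}$ over $\mathbb F_q$. A $2$-linear polynomial over $\mathbb F_{q^n}$ has the form $\sum_{j=0}^{mn-1}a_jx^{2^j}$ with $a_j\in\mathbb F_{q^n}$. Polynomials are regarded as maps on $\mathbb F_{q^n}$. *)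

theory Defs
  imports Main
begin

definition Tr :: "nat \<Rightarrow> nat \<Rightarrow> 'a::field \<Rightarrow> 'a" where
  "Tr q n y = (\<Sum>i<n. y ^ (q ^ i))"

definition is_2lin :: "nat \<Rightarrow> ('a::field \<Rightarrow> 'a) \<Rightarrow> bool" where
  "is_2lin N f \<longleftrightarrow> (\<exists>a :: nat \<Rightarrow> 'a. \<forall>x. f x = (\<Sum>j<N. a j * x ^ (2 ^ j)))"

text \<open>The subfield F_{q^k} of the ambient field, as the set of roots of x^(q^k) - x.\<close>
definition subF :: "nat \<Rightarrow> nat \<Rightarrow> 'a::field set" where
  "subF q k = {x. x ^ (q ^ k) = x}"

end

theory Submission
  imports Defs "HOL-Computational_Algebra.Primes" "HOL-Computational_Algebra.Polynomial"
begin

text \<open>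
  For additive M put f(x) = Tr(x^(q+1)) + M(x). Since Tr(y^q) = Tr(y), one gets
  f(x + a) - f(x) = Tr(x c) + Tr(a^(q+1)) + M(a) with c = a^q + a^(q^(n-1)).
  For even n, c = 0 exactly when a lies in F_(q^2), and then also Tr(a^(q+1)) = n a^(q+1) = 0;
  otherwise x |-> Tr(x c) maps onto F_q. Hence f permutes the field iff every a \<noteq> 0 with
  M(a) in F_q lies in F_(q^2) and has M(a) \<noteq> 0. This condition holds for the identity, and it
  survives composing M on the right with an additive bijection preserving F_(q^2), and on the left
  with one preserving F_q.
\<close>

lemma field_power_card_UNIV_eq_self:
  fixes x :: "'a::{field,finite}"
  shows "x ^ card (UNIV :: 'a set) = x"
proof (cases "x = 0")
  case False
  have "(\<Prod>y\<in>UNIV-{0}. x * y) = (\<Prod>y\<in>UNIV-{0}. y)"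
    by (rule prod.reindex_bij_witness[of _ "\<lambda>y. y / x" "\<lambda>y. x * y"]) (use False in auto)
  moreover have "(\<Prod>y\<in>UNIV-{0}. x * y) = x ^ (card (UNIV :: 'a set) - 1) * (\<Prod>y\<in>UNIV-{0}. y)"
    by (simp add: prod.distrib card_Diff_singleton)
  ultimately have "x ^ (card (UNIV :: 'a set) - 1) = 1"
    by simp
  moreover have "card (UNIV :: 'a set) = Suc (card (UNIV :: 'a set) - 1)"
    using finite_UNIV_card_ge_0[where 'a = 'a] by simp
  ultimately show ?thesis
    by (metis mult.right_neutral power_Suc)
qed (simp add: finite_UNIV_card_ge_0)

lemma CHAR_eq_2_if_card_UNIV_power_2:
  assumes "card (UNIV :: 'a::{field,finite} set) = 2 ^ k"
  shows "CHAR('a) = 2"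
proof (rule CHAR_eq_posI)
  have "2 \<le> card (UNIV :: 'a set)"
    using card_mono[of UNIV "{0::'a, 1}"] by simp
  then have "k \<noteq> 0"
    using assms by (cases k) auto
  then have "(-1 :: 'a) = (-1) ^ 2 ^ k"
    using field_power_card_UNIV_eq_self[of "-1 :: 'a"] assms by simp
  also have "\<dots> = 1"
    using \<open>k \<noteq> 0\<close> by simp
  finally show "of_nat 2 = (0 :: 'a)"
    by (metis add.right_inverse of_nat_1 of_nat_add one_add_one)
next
  fix x :: nat
  assume "0 < x" and "x < 2"
  then show "of_nat x \<noteq> (0 :: 'a)"
    by (simp add: less_2_cases_iff)
qed simp

lemma inj_iff_shift_neq:
  fixes f :: "'a::ab_group_add \<Rightarrow> 'b"
  shows "inj f \<longleftrightarrow> (\<forall>a. a \<noteq> 0 \<longrightarrow> (\<forall>x. f (x + a) \<noteq> f x))"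
proof
  assume "inj f"
  then show "\<forall>a. a \<noteq> 0 \<longrightarrow> (\<forall>x. f (x + a) \<noteq> f x)"
    by (auto dest: injD)
next
  assume no_collision: "\<forall>a. a \<noteq> 0 \<longrightarrow> (\<forall>x. f (x + a) \<noteq> f x)"
  show "inj f"
  proof (rule injI)
    fix x y
    assume "f x = f y"
    then show "x = y"
      using no_collision[rule_format, of "y - x" x] by auto
  qed
qed

lemma poly_nonzero_somewhere:
  fixes p :: "'a::{idom,finite} poly"
  assumes "p \<noteq> 0" and "degree p < card (UNIV :: 'a set)"
  shows "\<exists>x. poly p x \<noteq> 0"
proof (rule ccontr)
  assume "\<nexists>x. poly p x \<noteq> 0"
  then have "{x. poly p x = 0} = UNIV"
    by auto
  then show False
    using card_poly_roots_bound[OF assms(1)] assms(2) by simp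
qed

lemma is_2lin_add:
  fixes f :: "'a::field \<Rightarrow> 'a"
  assumes "CHAR('a) = 2" and "is_2lin N f"
  shows "f (x + y) = f x + f y"
proof -
  have "(x + y) ^ 2 ^ j = x ^ 2 ^ j + y ^ 2 ^ j" for j
    by (rule freshmans_dream') (simp_all add: assms(1))
  then show ?thesis
    using assms(2) by (auto simp: is_2lin_def distrib_left sum.distrib)
qed

lemma subF_power_pow:
  assumes "a \<in> subF q k"
  shows "a ^ (q ^ k) ^ j = (a :: 'a::field)"
proof (induction j)
  case (Suc j)
  then show ?case
    using assms by (simp add: subF_def power_mult mult.commute)
qed simp

lemma subF_1_subset_2: "subF q 1 \<subseteq> (subF q 2 :: 'a::field set)"
  using subF_power_pow[of _ q 1 2] by (auto simp: subF_def power2_eq_square power_mult)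

lemma Tr_mult_subF_1:
  assumes "t \<in> subF q 1"
  shows "Tr q n (t * y) = t * Tr q n (y :: 'a::field)"
  using subF_power_pow[OF assms] by (simp add: Tr_def power_mult_distrib sum_distrib_left)

definition perm_condition :: "nat \<Rightarrow> ('a::field \<Rightarrow> 'a) \<Rightarrow> bool" where
  "perm_condition q M \<longleftrightarrow> (\<forall>a. a \<noteq> 0 \<longrightarrow> M a \<in> subF q 1 \<longrightarrow> a \<in> subF q 2 \<and> M a \<noteq> 0)"

lemma perm_condition_id: "perm_condition q (\<lambda>x. x)"
  using subF_1_subset_2 by (auto simp: perm_condition_def)

lemma perm_condition_comp_right:
  assumes "perm_condition q M" and "inj lam" and "lam 0 = 0" and "lam ` subF q 2 = subF q 2"
  shows "perm_condition q (\<lambda>x. M (lam x))"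
  using assms unfolding perm_condition_def by (metis inj_image_mem_iff injD)

lemma perm_condition_comp_left:
  assumes "perm_condition q M" and "inj lam" and "lam 0 = 0" and "lam ` subF q 1 = subF q 1"
  shows "perm_condition q (\<lambda>x. lam (M x))"
  using assms unfolding perm_condition_def by (metis inj_image_mem_iff injD)

locale field_Fqn =
  fixes m n :: nat
  assumes card_UNIV: "card (UNIV :: 'a::{field,finite} set) = (2 ^ m) ^ n"
begin

abbreviation q :: nat where "q \<equiv> 2 ^ m"

lemma CHAR_eq_2: "CHAR('a) = 2"
  using CHAR_eq_2_if_card_UNIV_power_2[of "m * n"] card_UNIV by (simp add: power_mult)

lemma add_self_eq_0 [simp]: "(x :: 'a) + x = 0"
  using uminus_CHAR_2[OF CHAR_eq_2, of x] by (metis add.right_inverse)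

lemma add_eq_0_iff_eq: "(x :: 'a) + y = 0 \<longleftrightarrow> x = y"
  by (metis add_self_eq_0 add_right_cancel)

lemma n_pos: "n > 0"
  using card_UNIV card_mono[of UNIV "{0::'a, 1}"] by (cases n) auto

lemma q_ge_2: "q \<ge> 2"
  using card_UNIV card_mono[of UNIV "{0::'a, 1}"] by (cases m) auto

lemma power_q_pow_add: "((x :: 'a) + y) ^ q ^ i = x ^ q ^ i + y ^ q ^ i"
  by (rule freshmans_dream'[of _ "m * i"]) (simp_all add: CHAR_eq_2 power_mult)

lemma power_q_pow_sum: "(\<Sum>j\<in>A. f j :: 'a) ^ q ^ i = (\<Sum>j\<in>A. f j ^ q ^ i)"
  by (rule freshmans_dream_sum'[of _ "m * i"]) (simp_all add: CHAR_eq_2 power_mult)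

lemma power_q_n: "(x :: 'a) ^ q ^ n = x"
  using field_power_card_UNIV_eq_self[of x] card_UNIV by simp

lemma zero_in_subF: "(0 :: 'a) \<in> subF q k"
  by (simp add: subF_def)

lemma Tr_zero [simp]: "Tr q n (0 :: 'a) = 0"
  by (simp add: Tr_def zero_power)

lemma subF_add:
  assumes "t \<in> subF q k" and "s \<in> subF q k"
  shows "(t + s :: 'a) \<in> subF q k"
  using assms power_q_pow_add[of t s k] by (simp add: subF_def)

lemma Tr_add: "Tr q n ((x :: 'a) + y) = Tr q n x + Tr q n y"
  by (simp add: Tr_def power_q_pow_add sum.distrib)

lemma Tr_power_q: "Tr q n ((y :: 'a) ^ q) = Tr q n y"
proof -
  have "(\<Sum>i<Suc n. y ^ q ^ i) = y + Tr q n (y ^ q)"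
    by (simp only: sum.lessThan_Suc_shift Tr_def power_Suc power_mult power_0 power_one_right)
  moreover have "(\<Sum>i<Suc n. y ^ q ^ i) = Tr q n y + y"
    by (simp add: Tr_def power_q_n)
  ultimately show ?thesis
    by (simp add: add.commute)
qed

lemma Tr_in_subF_1: "Tr q n (y :: 'a) \<in> subF q 1"
proof -
  have "Tr q n y ^ q = (\<Sum>i<n. (y ^ q ^ i) ^ q)"
    using power_q_pow_sum[of "\<lambda>i. y ^ q ^ i" "{..<n}" 1] by (simp add: Tr_def)
  also have "\<dots> = Tr q n (y ^ q)"
    by (simp only: Tr_def power_mult[symmetric] mult.commute)
  finally show ?thesis
    by (simp add: subF_def Tr_power_q)
qed

lemma Tr_mult_nonzero_somewhere:
  assumes "(c :: 'a) \<noteq> 0"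
  shows "\<exists>x. Tr q n (x * c) \<noteq> 0"
proof -
  define p where "p = (\<Sum>i<n. monom (c ^ q ^ i) (q ^ i))"
  have poly_p: "poly p x = Tr q n (x * c)" for x
    by (simp add: p_def Tr_def poly_sum poly_monom power_mult_distrib mult.commute)
  have "coeff p (q ^ (n - 1)) = (\<Sum>i<n. if i = n - 1 then c ^ q ^ i else 0)"
    unfolding p_def coeff_sum coeff_monom using q_ge_2 by (intro sum.cong) simp_all
  also have "\<dots> = c ^ q ^ (n - 1)"
    using n_pos by simp
  finally have "p \<noteq> 0"
    using assms by auto
  moreover have "degree p \<le> q ^ (n - 1)"
    unfolding p_def using q_ge_2
    by (intro degree_sum_le) (auto intro: order.trans[OF degree_monom_le] power_increasing)
  moreover have "q ^ (n - 1) < card (UNIV :: 'a set)"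
    using q_ge_2 n_pos card_UNIV by (simp add: power_strict_increasing)
  ultimately show ?thesis
    using poly_nonzero_somewhere[of p] poly_p by auto
qed

lemma range_Tr_mult:
  assumes "(c :: 'a) \<noteq> 0"
  shows "range (\<lambda>x. Tr q n (x * c)) = subF q 1"
proof (intro equalityI subsetI)
  fix t :: 'a
  assume t: "t \<in> subF q 1"
  obtain x where x: "Tr q n (x * c) \<noteq> 0"
    using Tr_mult_nonzero_somewhere[OF assms] by blast
  define s where "s = t / Tr q n (x * c)"
  have "s \<in> subF q 1"
    using t Tr_in_subF_1 by (simp add: s_def subF_def power_divide)
  then have "Tr q n ((s * x) * c) = s * Tr q n (x * c)"
    by (simp only: Tr_mult_subF_1 mult.assoc)
  also have "\<dots> = t"
    using x by (simp add: s_def)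
  finally show "t \<in> range (\<lambda>x. Tr q n (x * c))"
    by (metis rangeI)
qed (auto intro: Tr_in_subF_1[simplified])

lemma power_q_pow_pred_n: "((a :: 'a) ^ q ^ (n - 1)) ^ q = a"
proof -
  have "(a ^ q ^ (n - 1)) ^ q = a ^ (q ^ (n - 1) * q)"
    by (rule power_mult[symmetric])
  also have "q ^ (n - 1) * q = q ^ n"
    by (rule power_minus_mult[OF n_pos])
  finally show ?thesis
    by (simp only: power_q_n)
qed

text \<open>The cross terms of Tr((x + a)^(q+1)) are Tr(x^q a + x a^q) = Tr(x * polar_coeff a).\<close>

definition polar_coeff :: "'a \<Rightarrow> 'a" where
  "polar_coeff a = a ^ q + a ^ q ^ (n - 1)"

lemma Tr_power_q_plus_1_add:
  "Tr q n (((x :: 'a) + a) ^ (q + 1)) =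
     Tr q n (x ^ (q + 1)) + Tr q n (x * polar_coeff a) + Tr q n (a ^ (q + 1))"
proof -
  have "(x + a) ^ (q + 1) = x ^ (q + 1) + x ^ q * a + x * a ^ q + a ^ (q + 1)"
    using power_q_pow_add[of x a 1] by (simp add: algebra_simps)
  moreover have "(x * a ^ q ^ (n - 1)) ^ q = x ^ q * a"
    by (simp only: power_mult_distrib power_q_pow_pred_n)
  then have "Tr q n (x ^ q * a) = Tr q n (x * a ^ q ^ (n - 1))"
    by (metis Tr_power_q)
  ultimately show ?thesis
    by (simp add: Tr_add polar_coeff_def distrib_left ac_simps)
qed

lemma subF_2_if_polar_coeff_eq_0:
  assumes "polar_coeff (a :: 'a) = 0"
  shows "a \<in> subF q 2"
proof -
  have "(a ^ q) ^ q + a = polar_coeff a ^ q"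
    using power_q_pow_add[of "a ^ q" "a ^ q ^ (n - 1)" 1]
    by (simp only: polar_coeff_def power_one_right power_q_pow_pred_n)
  then have "(a ^ q) ^ q = a"
    using assms add_eq_0_iff_eq by (simp add: zero_power)
  then show ?thesis
    by (simp add: subF_def power2_eq_square power_mult)
qed

end

locale even_field_Fqn = field_Fqn +
  assumes even_n: "even n"
begin

lemma polar_coeff_eq_0_iff: "polar_coeff (a :: 'a) = 0 \<longleftrightarrow> a \<in> subF q 2"
proof
  assume a: "a \<in> subF q 2"
  obtain j where "n = 2 * j"
    using even_n by blast
  then have "n - 1 = 2 * (j - 1) + 1"
    using n_pos by simp
  then have "a ^ q ^ (n - 1) = (a ^ (q ^ 2) ^ (j - 1)) ^ q"
    by (simp only: power_add power_one_right power_mult)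
  then show "polar_coeff a = 0"
    using subF_power_pow[OF a] by (simp add: polar_coeff_def)
qed (rule subF_2_if_polar_coeff_eq_0)

lemma Tr_power_q_plus_1_subF_2:
  assumes "(a :: 'a) \<in> subF q 2"
  shows "Tr q n (a ^ (q + 1)) = 0"
proof -
  have "(a ^ (q + 1)) ^ q = a ^ (q + 1)"
    using assms by (simp add: subF_def power_mult_distrib power2_eq_square power_mult mult.commute)
  then have "Tr q n (a ^ (q + 1)) = of_nat n * a ^ (q + 1)"
    using subF_power_pow[of "a ^ (q + 1)" q 1] by (simp add: Tr_def subF_def)
  also have "(of_nat n :: 'a) = 0"
    using even_n CHAR_eq_2 by (simp add: of_nat_eq_0_iff_char_dvd)
  finally show ?thesis
    by simp
qed

lemma Tr_form_shift_eq_iff: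
  assumes M_add: "\<And>x y. M (x + y) = M x + M y"
  shows "Tr q n ((x + a) ^ (q + 1)) + M (x + a) = Tr q n (x ^ (q + 1)) + M x \<longleftrightarrow>
    Tr q n (x * polar_coeff a) = Tr q n (a ^ (q + 1)) + M (a :: 'a)"
proof -
  have "Tr q n ((x + a) ^ (q + 1)) + M (x + a) =
      (Tr q n (x ^ (q + 1)) + M x) + (Tr q n (x * polar_coeff a) + (Tr q n (a ^ (q + 1)) + M a))"
    unfolding Tr_power_q_plus_1_add M_add by (simp only: add_ac)
  then show ?thesis
    by (simp only: add_eq_0_iff_eq add_cancel_left_right)
qed

lemma Tr_form_shift_neq_iff:
  assumes M_add: "\<And>x y. M (x + y) = M x + M y"
  shows "(\<forall>x. Tr q n ((x + a) ^ (q + 1)) + M (x + a) \<noteq> Tr q n (x ^ (q + 1)) + M x) \<longleftrightarrow>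
    (M a \<in> subF q 1 \<longrightarrow> a \<in> subF q 2 \<and> M (a :: 'a) \<noteq> 0)"
proof -
  define d where "d = Tr q n (a ^ (q + 1)) + M a"
  have "(\<forall>x. Tr q n ((x + a) ^ (q + 1)) + M (x + a) \<noteq> Tr q n (x ^ (q + 1)) + M x) \<longleftrightarrow>
      (\<forall>x. Tr q n (x * polar_coeff a) \<noteq> d)"
    by (simp only: Tr_form_shift_eq_iff[of M, OF M_add] d_def)
  also have "\<dots> \<longleftrightarrow> (M a \<in> subF q 1 \<longrightarrow> a \<in> subF q 2 \<and> M a \<noteq> 0)"
  proof (cases "polar_coeff a = 0")
    case True
    then have "a \<in> subF q 2"
      by (simp add: polar_coeff_eq_0_iff)
    then have "d = M a"
      by (simp only: d_def Tr_power_q_plus_1_subF_2 add_0_left)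
    then show ?thesis
      using True \<open>a \<in> subF q 2\<close> zero_in_subF[of 1] by auto
  next
    case False
    have "d \<in> subF q 1 \<longleftrightarrow> M a \<in> subF q 1"
      using subF_add[OF Tr_in_subF_1, of d "a ^ (q + 1)"] subF_add[OF Tr_in_subF_1, of "M a" "a ^ (q + 1)"]
      by (auto simp: d_def add.assoc[symmetric])
    moreover have "(\<forall>x. Tr q n (x * polar_coeff a) \<noteq> d) \<longleftrightarrow> d \<notin> subF q 1"
      unfolding range_Tr_mult[OF False, symmetric] by auto
    moreover have "a \<notin> subF q 2"
      using False by (simp add: polar_coeff_eq_0_iff)
    ultimately show ?thesis
      by blast
  qed
  finally show ?thesis .
qed

lemma bij_Tr_form_iff:
  assumes M_add: "\<And>x y. M (x + y) = M x + M y"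
  shows "bij (\<lambda>x. Tr q n (x ^ (q + 1)) + M x) \<longleftrightarrow> perm_condition q (M :: 'a \<Rightarrow> 'a)"
proof -
  have "bij (\<lambda>x. Tr q n (x ^ (q + 1)) + M x) \<longleftrightarrow> inj (\<lambda>x. Tr q n (x ^ (q + 1)) + M x)"
    unfolding bij_def using finite_UNIV_inj_surj[OF finite_UNIV] by blast
  also have "\<dots> \<longleftrightarrow> perm_condition q M"
    by (simp only: inj_iff_shift_neq Tr_form_shift_neq_iff[of M, OF M_add] perm_condition_def)
  finally show ?thesis .
qed

end

theorem mainTheorem14:
  fixes m n :: nat and L lam :: "'a::{field,finite} \<Rightarrow> 'a"
  assumes "m \<ge> 1"
    and "even n"
    and "card (UNIV :: 'a set) = (2 ^ m) ^ n"
    and "is_2lin (m * n) L"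
    and "bij (\<lambda>x. Tr (2 ^ m) n (x ^ (2 ^ m + 1)) + L x)"
    and "is_2lin (m * n) lam"
    and "bij lam"
  shows "(lam ` subF (2 ^ m) 2 = subF (2 ^ m) 2 \<longrightarrow>
            bij (\<lambda>x. Tr (2 ^ m) n (x ^ (2 ^ m + 1)) + lam x) \<and>
            bij (\<lambda>x. Tr (2 ^ m) n (x ^ (2 ^ m + 1)) + L (lam x)))
       \<and> (lam ` subF (2 ^ m) 1 = subF (2 ^ m) 1 \<longrightarrow>
            bij (\<lambda>x. Tr (2 ^ m) n (x ^ (2 ^ m + 1)) + lam (L x)))"
proof -
  \<comment> \<open>The hypothesis m \<ge> 1 is implied by the cardinality, as a field has two distinct elements.\<close>
  interpret even_field_Fqn m n
    using assms(2,3) by unfold_locales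
  have L_add: "L (x + y) = L x + L y" for x y
    by (rule is_2lin_add[OF CHAR_eq_2 assms(4)])
  have lam_add: "lam (x + y) = lam x + lam y" for x y
    by (rule is_2lin_add[OF CHAR_eq_2 assms(6)])
  have "lam 0 = 0"
    using lam_add[of 0 0] by simp
  note lam = bij_is_inj[OF assms(7)] this
  have L: "perm_condition q L"
    using assms(5) by (simp only: bij_Tr_form_iff L_add)
  show ?thesis
  proof (intro conjI impI)
    assume "lam ` subF q 2 = subF q 2"
    then show "bij (\<lambda>x. Tr q n (x ^ (q + 1)) + lam x)" and "bij (\<lambda>x. Tr q n (x ^ (q + 1)) + L (lam x))"
      using perm_condition_comp_right[OF perm_condition_id lam] perm_condition_comp_right[OF L lam]
      by (simp_all only: bij_Tr_form_iff L_add lam_add)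
  next
    assume "lam ` subF q 1 = subF q 1"
    then show "bij (\<lambda>x. Tr q n (x ^ (q + 1)) + lam (L x))"
      using perm_condition_comp_left[OF L lam]
      by (simp only: bij_Tr_form_iff L_add lam_add)
  qed
qed

end
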